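(* Consider the problem $\min f(x)$ subject to $x\in\mathcal{F}\cap\mathcal{Z}\cap X$, where $\mathcal{F}=\{x: g(x)\le0\}$, and suppose the extended Mangasarian–Fromovitz condition (EMFCQ, see context) holds. Then there is $\varepsilon^\star>0$ such that for every $\varepsilon\in(0,\varepsilon^\star]$ the penalty function $P(x;\varepsilon)=f(x)+\frac1\varepsilon\sum_{i=1}^m\max\{0,g_i(x)\}$ has no Clarke stationary points (for the problem $\min\{P(x;\varepsilon): x\in X\cap\mathcal{Z}\}$) in $(X\cap\mathcal{Z})\setminus\mathcal{F}$.
   Context: $\{1,\dots,n\}=I^c\cup I^z$, $I^c\cap I^z=\emptyset$; $v_c=(v_i)_{i\in I^c}$, $v_z=(v_i)_{i\in I^z}$. $l,u\in\mathbb{R}^n$ finite, $l_i<u_i$, $l_i,u_i\in\mathbb{Z}$ for $i\in I^z$; $X=\{x:l\le x\le u\}$, $\mathcal{Z}=\{x: x_i\in\mathbb{Z}\ \forall i\in I^z\}$. $f:\mathbb{R}^n\to\mathbb{R}$ and $g=(g_1,\dots,g_m):\mathbb{R}^n\to\mathbb{R}^m$ are Lipschitz continuous w.r.t. the continuous variables: there is $L>0$ with $|h(x)-h(y)|\le L\|x-y\|$ for $h\in\{f,g_1,\dots,g_m\}$ whenever $x_z=y_z$. A vector in $\mathbb{Z}^p$ is primitive if the gcd of its components is 1. For $x\in X\cap\mathcal{Z}$: $D^z(x)=\{d\in\mathbb{Z}^n: d_i=0\ (i\in I^c),\ d_z\text{ primitive},\ x+d\in X\cap\mathcal{Z}\}$,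 $\mathcal{B}^z(x)=\{x+d: d\in D^z(x)\}$, $D^c(x)=\{s: s_i=0\ (i\in I^z),\ s_i\ge0 \text{ if } i\in I^c,x_i=l_i,\ s_i\le0\text{ if } i\in I^c,x_i=u_i\}$. For $h$ Lipschitz w.r.t. continuous variables and $s$ with $s_z=0$: $h^{Cl}_{x_c}(x;s)=\limsup_{y_c\to x_c,\,y_z=x_z,\,t\downarrow0}\frac{h(y+ts)-h(y)}{t}$, and $\partial_c h(x)=\{v\in\mathbb{R}^n: v_z=0,\ h^{Cl}_{x_c}(x;s)\ge s^\top v\ \forall s \text{ with } s_z=0\}$. A point $x\in X\cap\mathcal{Z}$ is a Clarke stationary point of $\min\{P(\cdot;\varepsilon):X\cap\mathcal{Z}\}$ if $P^{Cl}_{x_c}(x;s)\ge0$ for all $s\in D^c(x)$ and $P(x;\varepsilon)\le P(y;\varepsilon)$ for all $y\in\mathcal{B}^z(x)$. EMFCQ: for every $x\in(X\cap\mathcal{Z})\setminus\operatorname{int}\mathcal{F}$, either (i) there is $s\in D^c(x)$ with $\xi^\top s<0$ for all $\xi\in\partial_c g_i(x)$ and all $i$ with $g_i(x)\ge0$; or (ii) there is $\bar d\in D^z(x)$ with $\sum_{i=1}^m\max\{0,g_i(x+\bar d)\}<\sum_{i=1}^m\max\{0,g_i(x)\}$. *)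

theory Defs
  imports "HOL-Analysis.Analysis"
begin

text \<open>Index set of coordinates: the finite type 'n (playing the role of {1,..,n});
  the integer coordinates are Iz, the continuous ones are the complement UNIV - Iz.\<close>

definition boxX :: "real^'n \<Rightarrow> real^'n \<Rightarrow> (real^'n) set" where
  "boxX l u = {x. \<forall>i. l$i \<le> x$i \<and> x$i \<le> u$i}"

definition Zset :: "'n set \<Rightarrow> (real^'n) set" where
  "Zset Iz = {x. \<forall>i\<in>Iz. x$i \<in> \<int>}"

definition primitive_on :: "'n set \<Rightarrow> real^'n \<Rightarrow> bool" where
  "primitive_on Iz d \<longleftrightarrow> Gcd ((\<lambda>i. \<lfloor>d$i\<rfloor>) ` Iz) = (1::int)"

definition Dz :: "'n set \<Rightarrow> real^'n \<Rightarrow> real^'n \<Rightarrow> real^'n \<Rightarrow> (real^'n) set" where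
  "Dz Iz l u x = {d. (\<forall>i. d$i \<in> \<int>) \<and> (\<forall>i. i \<notin> Iz \<longrightarrow> d$i = 0) \<and>
      primitive_on Iz d \<and> x + d \<in> boxX l u \<inter> Zset Iz}"

definition Bz :: "'n set \<Rightarrow> real^'n \<Rightarrow> real^'n \<Rightarrow> real^'n \<Rightarrow> (real^'n) set" where
  "Bz Iz l u x = (\<lambda>d. x + d) ` Dz Iz l u x"

definition Dc :: "'n set \<Rightarrow> real^'n \<Rightarrow> real^'n \<Rightarrow> real^'n \<Rightarrow> (real^'n) set" where
  "Dc Iz l u x = {s. (\<forall>i\<in>Iz. s$i = 0) \<and>
      (\<forall>i. i \<notin> Iz \<and> x$i = l$i \<longrightarrow> s$i \<ge> 0) \<and>
      (\<forall>i. i \<notin> Iz \<and> x$i = u$i \<longrightarrow> s$i \<le> 0)}"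

definition clarke_c :: "'n set \<Rightarrow> (real^'n \<Rightarrow> real) \<Rightarrow> real^'n \<Rightarrow> real^'n \<Rightarrow> ereal" where
  "clarke_c Iz h x s =
     Limsup ((inf (nhds x) (principal {y. \<forall>i\<in>Iz. y$i = x$i})) \<times>\<^sub>F at_right 0)
       (\<lambda>(y, t). ereal ((h (y + t *\<^sub>R s) - h y) / t))"

definition clarke_subdiff_c :: "'n set \<Rightarrow> (real^'n \<Rightarrow> real) \<Rightarrow> real^'n \<Rightarrow> (real^'n) set" where
  "clarke_subdiff_c Iz h x = {v. (\<forall>i\<in>Iz. v$i = 0) \<and>
      (\<forall>s. (\<forall>i\<in>Iz. s$i = 0) \<longrightarrow> clarke_c Iz h x s \<ge> ereal (s \<bullet> v))}"

definition lipschitz_c :: "'n set \<Rightarrow> real \<Rightarrow> (real^'n \<Rightarrow> real) \<Rightarrow> bool" where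
  "lipschitz_c Iz L h \<longleftrightarrow>
     (\<forall>x y. (\<forall>i\<in>Iz. x$i = y$i) \<longrightarrow> \<bar>h x - h y\<bar> \<le> L * norm (x - y))"

definition feasF :: "nat \<Rightarrow> (nat \<Rightarrow> real^'n \<Rightarrow> real) \<Rightarrow> (real^'n) set" where
  "feasF m g = {x. \<forall>i<m. g i x \<le> 0}"

definition viol :: "nat \<Rightarrow> (nat \<Rightarrow> real^'n \<Rightarrow> real) \<Rightarrow> real^'n \<Rightarrow> real" where
  "viol m g x = (\<Sum>i<m. max 0 (g i x))"

definition penalty :: "(real^'n \<Rightarrow> real) \<Rightarrow> nat \<Rightarrow> (nat \<Rightarrow> real^'n \<Rightarrow> real) \<Rightarrow> real \<Rightarrow> real^'n \<Rightarrow> real" where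
  "penalty f m g \<epsilon> x = f x + (1 / \<epsilon>) * viol m g x"

definition clarke_stationary ::
  "'n set \<Rightarrow> real^'n \<Rightarrow> real^'n \<Rightarrow> (real^'n \<Rightarrow> real) \<Rightarrow> real^'n \<Rightarrow> bool" where
  "clarke_stationary Iz l u P x \<longleftrightarrow>
     x \<in> boxX l u \<inter> Zset Iz \<and>
     (\<forall>s\<in>Dc Iz l u x. clarke_c Iz P x s \<ge> 0) \<and>
     (\<forall>y\<in>Bz Iz l u x. P x \<le> P y)"

definition EMFCQ ::
  "'n set \<Rightarrow> real^'n \<Rightarrow> real^'n \<Rightarrow> nat \<Rightarrow> (nat \<Rightarrow> real^'n \<Rightarrow> real) \<Rightarrow> bool" where
  "EMFCQ Iz l u m g \<longleftrightarrow>
     (\<forall>x\<in>(boxX l u \<inter> Zset Iz) - interior (feasF m g).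
        (\<exists>s\<in>Dc Iz l u x. \<forall>i<m. g i x \<ge> 0 \<longrightarrow>
             (\<forall>\<xi>\<in>clarke_subdiff_c Iz (g i) x. \<xi> \<bullet> s < 0)) \<or>
        (\<exists>d\<in>Dz Iz l u x. viol m g (x + d) < viol m g x))"

end

theory Submission
  imports Defs
begin

(*
  Every point xb of the compact set boxX l u \<inter> Zset Iz has a neighbourhood and a threshold e0 > 0
  such that for 0 < eps <= e0 no infeasible point of the neighbourhood is Clarke stationary for the
  penalty function; a finite subcover gives a uniform threshold. Grid points close to xb share its
  integer coordinates, so near xb everything happens in the fibre of xb, on which f and g are
  Lipschitz.
  If xb is interior to the feasible set, nearby points are feasible. Under EMFCQ (ii) the integer
  step d decreases the violation at xb, hence by at least half as much at nearby points x of the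
  fibre, and P(x) <= P(x + d) bounds eps from below by the variation of f. Under EMFCQ (i) the max
  formula (the Clarke derivative along s is the maximum of xi . s over the Clarke subdifferential,
  by a finite-dimensional Hahn-Banach argument) makes the Clarke derivatives of the active
  constraints along s less than -delta, uniformly near xb; the violation then decreases at rate
  delta along s, so the Clarke derivative of the penalty along s is at most L |s| - delta / eps < 0
  although s is a feasible direction.
*)

lemma convex_strict_epigraph_sublinear:
  fixes p :: "'a::real_vector \<Rightarrow> real"
  assumes sub: "\<And>a b. p (a + b) \<le> p a + p b"
    and hom: "\<And>c a. 0 < c \<Longrightarrow> p (c *\<^sub>R a) \<le> c * p a"
  shows "convex {z. p (fst z) < snd z}"
proof (rule convexI)
  fix z w :: "'a \<times> real" and u v :: real
  assume z: "z \<in> {z. p (fst z) < snd z}" and w: "w \<in> {z. p (fst z) < snd z}"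
    and uv: "0 \<le> u" "0 \<le> v" "u + v = 1"
  show "u *\<^sub>R z + v *\<^sub>R w \<in> {z. p (fst z) < snd z}"
  proof (cases "u = 0 \<or> v = 0")
    case True
    then show ?thesis using z w uv by auto
  next
    case False
    then have "0 < u" "0 < v" using uv by auto
    have "p (u *\<^sub>R fst z + v *\<^sub>R fst w) \<le> u * p (fst z) + v * p (fst w)"
      using sub hom[OF \<open>0 < u\<close>] hom[OF \<open>0 < v\<close>] by (meson add_mono order_trans)
    also have "\<dots> < u * snd z + v * snd w"
      using z w \<open>0 < u\<close> \<open>0 < v\<close> by (simp add: add_strict_mono)
    finally show ?thesis by simp
  qed
qed

lemma sublinear_pos_homogeneous:
  fixes p :: "'a::real_vector \<Rightarrow> real"
  assumes hom: "\<And>c a. 0 < c \<Longrightarrow> p (c *\<^sub>R a) \<le> c * p a" and "0 < c"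
  shows "p (c *\<^sub>R a) = c * p a"
proof -
  have "p a \<le> (1/c) * p (c *\<^sub>R a)" using hom[of "1/c" "c *\<^sub>R a"] \<open>0 < c\<close> by simp
  then show ?thesis using hom[OF \<open>0 < c\<close>, of a] \<open>0 < c\<close> by (simp add: field_simps)
qed

lemma sublinear_separation:
  fixes p :: "'a::euclidean_space \<Rightarrow> real"
  assumes sub: "\<And>a b. p (a + b) \<le> p a + p b"
    and hom: "\<And>c a. 0 < c \<Longrightarrow> p (c *\<^sub>R a) \<le> c * p a"
    and p0: "p 0 = 0"
  shows "\<exists>a \<alpha>. \<alpha> < 0 \<and> (\<forall>s \<tau>. p s < \<tau> \<longrightarrow> a \<bullet> s + \<alpha> * \<tau> \<le> 0) \<and> 0 \<le> a \<bullet> y + \<alpha> * p y"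
proof -
  note hom_eq = sublinear_pos_homogeneous[OF hom]
  define E where "E = {z :: 'a \<times> real. p (fst z) < snd z}"
  define R where "R = (\<lambda>c. c *\<^sub>R (y, p y)) ` {0..}"
  have "convex E" unfolding E_def by (rule convex_strict_epigraph_sublinear[OF sub hom])
  moreover have "convex R"
    unfolding R_def by (intro convex_linear_image convex_real_interval bounded_linear.linear
        bounded_linear_scaleR_left)
  moreover have "(0, 1) \<in> E" unfolding E_def using p0 by simp
  moreover have "0 \<in> R" unfolding R_def by (rule image_eqI[of _ _ 0]) (auto simp: zero_prod_def)
  moreover have "E \<inter> R = {}"
    unfolding E_def R_def using p0 hom_eq by (force simp: less_eq_real_def)
  ultimately obtain w b where w: "w \<noteq> 0" "\<forall>z\<in>E. w \<bullet> z \<le> b" "\<forall>z\<in>R. b \<le> w \<bullet> z"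
    using separating_hyperplane_sets[of E R] by (metis empty_iff)
  obtain a \<alpha> where w_eq: "w = (a, \<alpha>)" by (cases w)
  have w_inner: "w \<bullet> (s, \<tau>) = a \<bullet> s + \<alpha> * \<tau>" for s \<tau> unfolding w_eq by (simp add: inner_Pair)
  (* E is a cone, so the separating half-space may be taken through the origin *)
  have cone: "a \<bullet> s + \<alpha> * \<tau> \<le> 0" if "p s < \<tau>" for s \<tau>
  proof (rule ccontr)
    assume pos: "\<not> ?thesis"
    define c where "c = (\<bar>b\<bar> + 1) / (a \<bullet> s + \<alpha> * \<tau>)"
    have "0 < c" using pos unfolding c_def by simp
    then have "(c *\<^sub>R s, c * \<tau>) \<in> E" using that hom_eq unfolding E_def by simp
    then have "c * (a \<bullet> s + \<alpha> * \<tau>) \<le> b" using w(2) w_inner by (fastforce simp: algebra_simps)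
    moreover have "c * (a \<bullet> s + \<alpha> * \<tau>) = \<bar>b\<bar> + 1" using pos unfolding c_def by simp
    ultimately show False by simp
  qed
  have "\<alpha> < 0"
  proof -
    have "\<alpha> \<le> 0" using cone[of 0 1] p0 by simp
    moreover have "\<alpha> \<noteq> 0"
    proof
      assume "\<alpha> = 0"
      then have "a \<bullet> a \<le> 0" using cone[of a "p a + 1"] by simp
      then show False using w(1) \<open>\<alpha> = 0\<close> unfolding w_eq by (simp add: zero_prod_def flip: not_less)
    qed
    ultimately show ?thesis by simp
  qed
  have "0 \<le> b"
  proof (rule ccontr)
    assume "\<not> 0 \<le> b"
    then have "(0, b / (2 * \<alpha>)) \<in> E" using \<open>\<alpha> < 0\<close> p0 unfolding E_def by (simp add: divide_neg_neg)
    then have "\<alpha> * (b / (2 * \<alpha>)) \<le> b" using w(2) w_inner by fastforce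
    then show False using \<open>\<not> 0 \<le> b\<close> \<open>\<alpha> < 0\<close> by simp
  qed
  have "(y, p y) \<in> R" unfolding R_def by (auto intro: image_eqI[of _ _ 1])
  then have "0 \<le> a \<bullet> y + \<alpha> * p y" using w(3) w_inner \<open>0 \<le> b\<close> by fastforce
  with \<open>\<alpha> < 0\<close> cone show ?thesis by blast
qed

lemma sublinear_linear_minorant:
  fixes p :: "'a::euclidean_space \<Rightarrow> real"
  assumes sub: "\<And>a b. p (a + b) \<le> p a + p b"
    and hom: "\<And>c a. 0 < c \<Longrightarrow> p (c *\<^sub>R a) \<le> c * p a"
    and p0: "p 0 = 0"
  shows "\<exists>v. (\<forall>s. v \<bullet> s \<le> p s) \<and> v \<bullet> y = p y"
proof -
  obtain a \<alpha> where \<alpha>: "\<alpha> < 0" and cone: "\<And>s \<tau>. p s < \<tau> \<Longrightarrow> a \<bullet> s + \<alpha> * \<tau> \<le> 0"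
    and at_y: "0 \<le> a \<bullet> y + \<alpha> * p y"
    using sublinear_separation[OF sub hom p0, of y] by blast
  define v where "v = (- 1 / \<alpha>) *\<^sub>R a"
  have v_le: "v \<bullet> s \<le> p s" for s
  proof (rule field_le_epsilon)
    fix e :: real assume "0 < e"
    have "a \<bullet> s \<le> (p s + e) * (- \<alpha>)" using cone[of s "p s + e"] \<open>0 < e\<close> by (simp add: algebra_simps)
    then show "v \<bullet> s \<le> p s + e" unfolding v_def using \<alpha> by (simp add: field_simps)
  qed
  have "p y \<le> v \<bullet> y" using at_y \<alpha> unfolding v_def by (simp add: field_simps)
  then show ?thesis using v_le by (intro exI[of _ v]) (simp add: order_antisym)
qed

lemma compact_uniform_threshold:
  fixes P :: "'a::topological_space \<Rightarrow> real \<Rightarrow> bool"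
  assumes "compact K"
    and "\<forall>x\<in>K. \<exists>e>0. eventually (\<lambda>y. \<forall>\<epsilon>. 0 < \<epsilon> \<and> \<epsilon> \<le> e \<longrightarrow> P y \<epsilon>) (nhds x)"
  shows "\<exists>e>0. \<forall>y\<in>K. \<forall>\<epsilon>. 0 < \<epsilon> \<and> \<epsilon> \<le> e \<longrightarrow> P y \<epsilon>"
proof -
  obtain E where E: "\<forall>x\<in>K. 0 < E x \<and> eventually (\<lambda>y. \<forall>\<epsilon>. 0 < \<epsilon> \<and> \<epsilon> \<le> E x \<longrightarrow> P y \<epsilon>) (nhds x)"
    using assms(2) by metis
  then have "\<forall>x\<in>K. \<exists>S. open S \<and> x \<in> S \<and> (\<forall>y\<in>S. \<forall>\<epsilon>. 0 < \<epsilon> \<and> \<epsilon> \<le> E x \<longrightarrow> P y \<epsilon>)"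
    unfolding eventually_nhds by blast
  then obtain U where U: "\<forall>x\<in>K. open (U x) \<and> x \<in> U x \<and> (\<forall>y\<in>U x. \<forall>\<epsilon>. 0 < \<epsilon> \<and> \<epsilon> \<le> E x \<longrightarrow> P y \<epsilon>)"
    by metis
  obtain C where C: "C \<subseteq> K" "finite C" "K \<subseteq> (\<Union>x\<in>C. U x)"
    by (rule compactE_image[OF assms(1), of K U]) (use U in auto)
  define e where "e = Min (insert 1 (E ` C))"
  have "0 < e" unfolding e_def using C(1,2) E by (subst Min_gr_iff) auto
  moreover have "P y \<epsilon>" if "y \<in> K" "0 < \<epsilon>" "\<epsilon> \<le> e" for y \<epsilon>
  proof -
    obtain x where x: "x \<in> C" "y \<in> U x" using C(3) \<open>y \<in> K\<close> by blast
    have "e \<le> E x" unfolding e_def using C(2) x(1) by (intro Min_le) auto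
    then have "0 < \<epsilon> \<and> \<epsilon> \<le> E x" using that by simp
    then show ?thesis using U x C(1) by blast
  qed
  ultimately show ?thesis by blast
qed

definition fibre :: "'n set \<Rightarrow> real^'n \<Rightarrow> (real^'n) set" where
  "fibre Iz x = {y. \<forall>i\<in>Iz. y$i = x$i}"

definition fibre_nhds :: "'n set \<Rightarrow> real^'n \<Rightarrow> (real^'n) filter" where
  "fibre_nhds Iz x = inf (nhds x) (principal (fibre Iz x))"

definition clarke_filter :: "'n set \<Rightarrow> real^'n \<Rightarrow> ((real^'n) \<times> real) filter" where
  "clarke_filter Iz x = fibre_nhds Iz x \<times>\<^sub>F at_right 0"

definition diff_quotient :: "(real^'n \<Rightarrow> real) \<Rightarrow> real^'n \<Rightarrow> (real^'n) \<times> real \<Rightarrow> real" where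
  "diff_quotient h s z = (h (fst z + snd z *\<^sub>R s) - h (fst z)) / snd z"

lemma clarke_c_eq_Limsup:
  "clarke_c Iz h x s = Limsup (clarke_filter Iz x) (\<lambda>z. ereal (diff_quotient h s z))"
  unfolding clarke_c_def clarke_filter_def fibre_nhds_def fibre_def diff_quotient_def
  by (simp add: case_prod_unfold)

lemma fibre_eq: "y \<in> fibre Iz x \<Longrightarrow> fibre Iz y = fibre Iz x"
  unfolding fibre_def by auto

lemma fibre_add_scaleR: "y \<in> fibre Iz x \<Longrightarrow> \<forall>i\<in>Iz. s$i = 0 \<Longrightarrow> y + t *\<^sub>R s \<in> fibre Iz x"
  unfolding fibre_def by auto

lemma fibre_nhds_neq_bot: "fibre_nhds Iz x \<noteq> bot"
proof
  assume "fibre_nhds Iz x = bot"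
  then have "eventually (\<lambda>y. y \<in> fibre Iz x \<longrightarrow> False) (nhds x)"
    unfolding fibre_nhds_def eventually_inf_principal[symmetric] by simp
  then show False
    using eventually_nhds_x_imp_x by (fastforce simp: fibre_def)
qed

lemma clarke_filter_neq_bot: "clarke_filter Iz x \<noteq> bot"
  unfolding clarke_filter_def prod_filter_eq_bot using fibre_nhds_neq_bot by simp

lemma eventually_fibre_nhds_fibre: "eventually (\<lambda>y. y \<in> fibre Iz x) (fibre_nhds Iz x)"
  unfolding fibre_nhds_def eventually_inf_principal by simp

lemma eventually_clarke_filter_pos: "eventually (\<lambda>z. 0 < snd z) (clarke_filter Iz x)"
  unfolding clarke_filter_def
  using eventually_compose_filterlim[OF eventually_at_right_less filterlim_snd] .

lemma filterlim_clarke_filter_fst: "filterlim fst (fibre_nhds Iz x) (clarke_filter Iz x)"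
  unfolding clarke_filter_def by (rule filterlim_fst)

lemma filterlim_clarke_filter_step:
  assumes "\<forall>i\<in>Iz. s$i = 0"
  shows "filterlim (\<lambda>z. fst z + snd z *\<^sub>R s) (fibre_nhds Iz x) (clarke_filter Iz x)"
  unfolding fibre_nhds_def filterlim_inf filterlim_principal
proof
  have "((\<lambda>z. fst z + snd z *\<^sub>R s) \<longlongrightarrow> x + 0 *\<^sub>R s) (clarke_filter Iz x)"
  proof (intro tendsto_intros)
    show "(fst \<longlongrightarrow> x) (clarke_filter Iz x)"
      using filterlim_clarke_filter_fst unfolding fibre_nhds_def filterlim_inf by blast
    show "(snd \<longlongrightarrow> 0) (clarke_filter Iz x)"
      unfolding clarke_filter_def
      by (rule filterlim_mono[OF filterlim_snd _ order_refl]) (simp add: at_within_def)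
  qed
  then show "LIM z clarke_filter Iz x. fst z + snd z *\<^sub>R s :> nhds x" by simp
  show "\<forall>\<^sub>F z in clarke_filter Iz x. fst z + snd z *\<^sub>R s \<in> fibre Iz x"
    using eventually_compose_filterlim[OF eventually_fibre_nhds_fibre filterlim_clarke_filter_fst]
    by eventually_elim (rule fibre_add_scaleR[OF _ assms])
qed

lemma filterlim_clarke_filter_shift:
  assumes "\<forall>i\<in>Iz. s$i = 0"
  shows "filterlim (\<lambda>z. (fst z + snd z *\<^sub>R s, snd z)) (clarke_filter Iz x) (clarke_filter Iz x)"
  unfolding clarke_filter_def
  by (intro filterlim_Pair filterlim_snd filterlim_clarke_filter_step[OF assms, unfolded clarke_filter_def])

lemma filterlim_clarke_filter_scale:
  assumes "0 < (c::real)"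
  shows "filterlim (\<lambda>z. (fst z, c * snd z)) (clarke_filter Iz x) (clarke_filter Iz x)"
proof -
  have "filterlim (times c) (at_right 0) (at_right (0::real))"
    unfolding filterlim_def using filtermap_times_pos_at_right[OF assms, of 0] by simp
  then show ?thesis
    unfolding clarke_filter_def
    by (intro filterlim_Pair filterlim_fst filterlim_compose[OF _ filterlim_snd])
qed

lemma diff_quotient_add:
  "diff_quotient h (a + b) z = diff_quotient h a (fst z + snd z *\<^sub>R b, snd z) + diff_quotient h b z"
  unfolding diff_quotient_def by (simp add: add_divide_distrib[symmetric] algebra_simps)

lemma diff_quotient_scaleR:
  "c \<noteq> 0 \<Longrightarrow> diff_quotient h (c *\<^sub>R a) z = c * diff_quotient h a (fst z, c * snd z)"
  unfolding diff_quotient_def by (simp add: mult.commute)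

lemma lipschitz_c_diff_quotient_bound:
  assumes "lipschitz_c Iz L h" "\<forall>i\<in>Iz. s$i = 0" "0 < snd z"
  shows "\<bar>diff_quotient h s z\<bar> \<le> L * norm s"
proof -
  have "\<forall>i\<in>Iz. (fst z + snd z *\<^sub>R s)$i = fst z $ i" using assms(2) by simp
  then have "\<bar>h (fst z + snd z *\<^sub>R s) - h (fst z)\<bar> \<le> L * norm (fst z + snd z *\<^sub>R s - fst z)"
    using assms(1) unfolding lipschitz_c_def by blast
  then show ?thesis
    using assms(3) unfolding diff_quotient_def by (simp add: abs_divide divide_le_eq mult_ac)
qed

(* Meaningful for Lipschitz h only, where clarke_c is finite (clarke_c_finite); real_of_ereal maps
   the infinite values to 0. *)
definition clarke_real :: "'n set \<Rightarrow> (real^'n \<Rightarrow> real) \<Rightarrow> real^'n \<Rightarrow> real^'n \<Rightarrow> real" where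
  "clarke_real Iz h x s = real_of_ereal (clarke_c Iz h x s)"

lemma clarke_c_finite:
  assumes "lipschitz_c Iz L h" "\<forall>i\<in>Iz. s$i = 0"
  shows "clarke_c Iz h x s = ereal (clarke_real Iz h x s)" "\<bar>clarke_real Iz h x s\<bar> \<le> L * norm s"
proof -
  let ?q = "\<lambda>z. ereal (diff_quotient h s z)"
  have bound: "eventually (\<lambda>z. \<bar>diff_quotient h s z\<bar> \<le> L * norm s) (clarke_filter Iz x)"
    using eventually_clarke_filter_pos
    by eventually_elim (rule lipschitz_c_diff_quotient_bound[OF assms])
  have "clarke_c Iz h x s \<le> ereal (L * norm s)"
    unfolding clarke_c_eq_Limsup using bound
    by (intro Limsup_bounded) (auto elim: eventually_mono)
  moreover have "ereal (- (L * norm s)) \<le> clarke_c Iz h x s"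
  proof -
    have "ereal (- (L * norm s)) \<le> Liminf (clarke_filter Iz x) ?q"
      using bound by (intro Liminf_bounded) (auto elim: eventually_mono)
    also have "\<dots> \<le> Limsup (clarke_filter Iz x) ?q"
      by (rule Liminf_le_Limsup) (simp add: clarke_filter_neq_bot)
    finally show ?thesis unfolding clarke_c_eq_Limsup .
  qed
  ultimately show "clarke_c Iz h x s = ereal (clarke_real Iz h x s)"
    and "\<bar>clarke_real Iz h x s\<bar> \<le> L * norm s"
    unfolding clarke_real_def by (cases "clarke_c Iz h x s"; simp)+
qed

lemma clarke_real_le:
  assumes "lipschitz_c Iz L h" "\<forall>i\<in>Iz. s$i = 0"
    and "eventually (\<lambda>z. diff_quotient h s z \<le> c) (clarke_filter Iz x)"
  shows "clarke_real Iz h x s \<le> c"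
proof -
  have "clarke_c Iz h x s \<le> ereal c"
    unfolding clarke_c_eq_Limsup using assms(3) by (intro Limsup_bounded) (auto elim: eventually_mono)
  then show ?thesis using clarke_c_finite(1)[OF assms(1,2)] by simp
qed

lemma eventually_diff_quotient_less:
  assumes "lipschitz_c Iz L h" "\<forall>i\<in>Iz. s$i = 0" "clarke_real Iz h x s < c"
  shows "eventually (\<lambda>z. diff_quotient h s z < c) (clarke_filter Iz x)"
proof -
  have "Limsup (clarke_filter Iz x) (\<lambda>z. ereal (diff_quotient h s z)) < ereal c"
    using assms(3) clarke_c_finite(1)[OF assms(1,2)] unfolding clarke_c_eq_Limsup by simp
  from Limsup_lessD[OF this] show ?thesis by simp
qed

lemma clarke_real_add_le:
  assumes h: "lipschitz_c Iz L h" and a: "\<forall>i\<in>Iz. a$i = 0" and b: "\<forall>i\<in>Iz. b$i = 0"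
  shows "clarke_real Iz h x (a + b) \<le> clarke_real Iz h x a + clarke_real Iz h x b"
proof (rule field_le_epsilon)
  fix e :: real assume "0 < e"
  have "eventually (\<lambda>z. diff_quotient h a z < clarke_real Iz h x a + e/2) (clarke_filter Iz x)"
    using \<open>0 < e\<close> by (intro eventually_diff_quotient_less[OF h a]) simp
  then have qa: "eventually (\<lambda>z. diff_quotient h a (fst z + snd z *\<^sub>R b, snd z) < clarke_real Iz h x a + e/2)
      (clarke_filter Iz x)"
    by (rule eventually_compose_filterlim[OF _ filterlim_clarke_filter_shift[OF b]])
  have qb: "eventually (\<lambda>z. diff_quotient h b z < clarke_real Iz h x b + e/2) (clarke_filter Iz x)"
    using \<open>0 < e\<close> by (intro eventually_diff_quotient_less[OF h b]) simp
  have "\<forall>i\<in>Iz. (a + b)$i = 0" using a b by simp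
  then show "clarke_real Iz h x (a + b) \<le> clarke_real Iz h x a + clarke_real Iz h x b + e"
    using qa qb by (intro clarke_real_le[OF h]) (auto elim: eventually_elim2 simp: diff_quotient_add)
qed

lemma clarke_real_scaleR_le:
  assumes h: "lipschitz_c Iz L h" and a: "\<forall>i\<in>Iz. a$i = 0" and c: "0 < c"
  shows "clarke_real Iz h x (c *\<^sub>R a) \<le> c * clarke_real Iz h x a"
proof (rule field_le_epsilon)
  fix e :: real assume "0 < e"
  have "eventually (\<lambda>z. diff_quotient h a z < clarke_real Iz h x a + e/c) (clarke_filter Iz x)"
    using \<open>0 < e\<close> c by (intro eventually_diff_quotient_less[OF h a]) simp
  then have "eventually (\<lambda>z. diff_quotient h a (fst z, c * snd z) < clarke_real Iz h x a + e/c)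
      (clarke_filter Iz x)"
    by (rule eventually_compose_filterlim[OF _ filterlim_clarke_filter_scale[OF c]])
  then have "eventually (\<lambda>z. diff_quotient h (c *\<^sub>R a) z \<le> c * clarke_real Iz h x a + e)
      (clarke_filter Iz x)"
  proof eventually_elim
    case (elim z)
    then have "c * diff_quotient h a (fst z, c * snd z) \<le> c * (clarke_real Iz h x a + e/c)"
      using c by simp
    then show ?case using c by (simp add: diff_quotient_scaleR distrib_left)
  qed
  then show "clarke_real Iz h x (c *\<^sub>R a) \<le> c * clarke_real Iz h x a + e"
    using a by (intro clarke_real_le[OF h]) auto
qed

lemma clarke_subdiff_c_attains:
  fixes Iz :: "'n::finite set"
  assumes h: "lipschitz_c Iz L h" and s: "\<forall>i\<in>Iz. s$i = 0"
  shows "\<exists>\<xi>\<in>clarke_subdiff_c Iz h x. \<xi> \<bullet> s = clarke_real Iz h x s"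
proof -
  define proj :: "real^'n \<Rightarrow> real^'n" where "proj v = (\<chi> i. if i \<in> Iz then 0 else v$i)" for v
  have proj_Iz: "\<forall>i\<in>Iz. proj v $ i = 0" for v unfolding proj_def by simp
  have proj_id: "proj v = v" if "\<forall>i\<in>Iz. v$i = 0" for v
    using that unfolding proj_def by (simp add: vec_eq_iff)
  have proj_inner: "proj v \<bullet> a = v \<bullet> proj a" for v a
    unfolding proj_def inner_vec_def by (intro sum.cong) auto
  have proj_add: "proj (a + b) = proj a + proj b" for a b unfolding proj_def by (simp add: vec_eq_iff)
  have proj_scaleR: "proj (c *\<^sub>R a) = c *\<^sub>R proj a" for c a unfolding proj_def by (simp add: vec_eq_iff)
  let ?p = "\<lambda>a. clarke_real Iz h x (proj a)"
  have "\<exists>v. (\<forall>a. v \<bullet> a \<le> ?p a) \<and> v \<bullet> s = ?p s"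
  proof (rule sublinear_linear_minorant)
    show "?p (a + b) \<le> ?p a + ?p b" for a b
      unfolding proj_add by (rule clarke_real_add_le[OF h proj_Iz proj_Iz])
    show "?p (c *\<^sub>R a) \<le> c * ?p a" if "0 < c" for c a
      unfolding proj_scaleR by (rule clarke_real_scaleR_le[OF h proj_Iz that])
    show "?p 0 = 0" using clarke_c_finite(2)[OF h proj_Iz, of x 0] by (simp add: proj_id)
  qed
  then obtain v where v_le: "\<forall>a. v \<bullet> a \<le> ?p a" and v_eq: "v \<bullet> s = ?p s" by blast
  have "proj v \<in> clarke_subdiff_c Iz h x"
    unfolding clarke_subdiff_c_def
  proof (intro CollectI conjI allI impI)
    fix a :: "real^'n" assume a: "\<forall>i\<in>Iz. a$i = 0"
    have "a \<bullet> proj v = v \<bullet> proj a" by (metis inner_commute proj_inner)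
    also have "\<dots> \<le> clarke_real Iz h x a" using v_le proj_id[OF a] by metis
    finally have "a \<bullet> proj v \<le> clarke_real Iz h x a" .
    then show "ereal (a \<bullet> proj v) \<le> clarke_c Iz h x a" using clarke_c_finite(1)[OF h a] by simp
  qed (rule proj_Iz)
  moreover have "proj v \<bullet> s = clarke_real Iz h x s" using v_eq proj_id[OF s] by (simp add: proj_inner)
  ultimately show ?thesis by blast
qed

lemma compact_box_grid: "compact (boxX l u \<inter> Zset Iz)"
proof -
  have "boxX l u = cbox l u" unfolding boxX_def by (auto simp: mem_box_cart)
  moreover have "Zset Iz = (\<Inter>i\<in>Iz. (\<lambda>x. x$i) -` \<int>)" unfolding Zset_def by auto
  moreover have "closed ((\<lambda>x::real^'n. x$i) -` \<int>)" for i
    by (intro continuous_closed_vimage closed_Ints continuous_intros)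
  ultimately show ?thesis by (metis compact_Int_closed compact_cbox closed_INT)
qed

lemma eventually_grid_fibre:
  assumes "xb \<in> Zset Iz" and "eventually P (fibre_nhds Iz xb)"
  shows "eventually (\<lambda>x. x \<in> Zset Iz \<longrightarrow> P x) (nhds xb)"
proof -
  have "eventually (\<lambda>x. x \<in> ball xb 1) (nhds xb)" by (rule eventually_nhds_in_open) auto
  moreover have "eventually (\<lambda>x. x \<in> fibre Iz xb \<longrightarrow> P x) (nhds xb)"
    using assms(2) unfolding fibre_nhds_def eventually_inf_principal .
  ultimately show ?thesis
  proof eventually_elim
    case (elim x)
    have "x \<in> fibre Iz xb" if "x \<in> Zset Iz"
      unfolding fibre_def
    proof (intro CollectI ballI)
      fix i assume "i \<in> Iz"
      have "\<bar>(x - xb)$i\<bar> < 1"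
        using elim(1) component_le_norm_cart[of "x - xb" i] by (simp add: dist_norm norm_minus_commute)
      moreover have "(x - xb)$i \<in> \<int>" using assms(1) that \<open>i \<in> Iz\<close> unfolding Zset_def by auto
      ultimately show "x$i = xb$i" using Ints_nonzero_abs_less1 by fastforce
    qed
    then show ?case using elim(2) by blast
  qed
qed

lemma eventually_fibre_nhds_clarke_filter:
  assumes "eventually P (clarke_filter Iz xb)"
  shows "eventually (\<lambda>x. eventually P (clarke_filter Iz x)) (fibre_nhds Iz xb)"
proof -
  obtain Pf Pg where Pf: "eventually Pf (fibre_nhds Iz xb)" and Pg: "eventually Pg (at_right 0)"
    and P: "\<forall>y t. Pf y \<longrightarrow> Pg t \<longrightarrow> P (y, t)"
    using assms unfolding clarke_filter_def eventually_prod_filter by blast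
  have "eventually (\<lambda>x. eventually (\<lambda>y. y \<in> fibre Iz xb \<longrightarrow> Pf y) (nhds x)) (nhds xb)"
    using Pf unfolding fibre_nhds_def eventually_inf_principal eventually_eventually .
  then have "eventually (\<lambda>x. eventually Pf (fibre_nhds Iz x)) (fibre_nhds Iz xb)"
    unfolding fibre_nhds_def eventually_inf_principal by eventually_elim (simp add: fibre_eq)
  then show ?thesis
    unfolding clarke_filter_def eventually_prod_filter using Pg P by (auto elim!: eventually_mono)
qed

lemma eventually_Dc_subset: "eventually (\<lambda>x. Dc Iz l u xb \<subseteq> Dc Iz l u x) (nhds xb)"
proof -
  have bound_stays: "eventually (\<lambda>x. x$i = c \<longrightarrow> xb$i = c) (nhds xb)" for i c
  proof (cases "xb$i = c")
    case False
    then have "eventually (\<lambda>x. x$i \<noteq> c) (nhds xb)"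
      by (intro tendsto_imp_eventually_ne[OF tendsto_vec_nth[OF filterlim_ident]])
    then show ?thesis by (rule eventually_mono) simp
  qed simp
  have "eventually (\<lambda>x. \<forall>i. (x$i = l$i \<longrightarrow> xb$i = l$i) \<and> (x$i = u$i \<longrightarrow> xb$i = u$i)) (nhds xb)"
    by (intro eventually_all_finite eventually_conj bound_stays)
  then show ?thesis unfolding Dc_def by eventually_elim auto
qed

lemma Dz_fibre:
  assumes "x \<in> fibre Iz xb" "x \<in> boxX l u" "d \<in> Dz Iz l u xb"
  shows "d \<in> Dz Iz l u x"
proof -
  have xbd: "xb + d \<in> boxX l u \<inter> Zset Iz" using assms(3) unfolding Dz_def by blast
  have on_Iz: "(x + d)$i = (xb + d)$i" if "i \<in> Iz" for i using assms(1) that unfolding fibre_def by simp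
  have off_Iz: "(x + d)$i = x$i" if "i \<notin> Iz" for i using assms(3) that unfolding Dz_def by simp
  have "l$i \<le> (x + d)$i \<and> (x + d)$i \<le> u$i" for i
    using on_Iz[of i] off_Iz[of i] xbd assms(2) unfolding boxX_def by (cases "i \<in> Iz") auto
  moreover have "(x + d)$i \<in> \<int>" if "i \<in> Iz" for i
    using on_Iz[OF that] xbd that unfolding Zset_def by auto
  ultimately have "x + d \<in> boxX l u \<inter> Zset Iz" unfolding boxX_def Zset_def by blast
  then show ?thesis using assms(3) unfolding Dz_def by blast
qed

lemma lipschitz_c_viol:
  fixes Iz :: "'n::finite set"
  assumes "\<forall>i<m. lipschitz_c Iz L (g i)"
  shows "lipschitz_c Iz (m * L) (viol m g)"
  unfolding lipschitz_c_def
proof (intro allI impI)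
  fix x y :: "real^'n" assume xy: "\<forall>i\<in>Iz. x$i = y$i"
  have "\<bar>viol m g x - viol m g y\<bar> = \<bar>\<Sum>i<m. max 0 (g i x) - max 0 (g i y)\<bar>"
    unfolding viol_def by (simp add: sum_subtractf)
  also have "\<dots> \<le> (\<Sum>i<m. \<bar>max 0 (g i x) - max 0 (g i y)\<bar>)" by (rule sum_abs)
  also have "\<dots> \<le> (\<Sum>i<m. L * norm (x - y))"
  proof (rule sum_mono)
    fix i assume "i \<in> {..<m}"
    then have "\<bar>g i x - g i y\<bar> \<le> L * norm (x - y)" using assms xy unfolding lipschitz_c_def by blast
    then show "\<bar>max 0 (g i x) - max 0 (g i y)\<bar> \<le> L * norm (x - y)" by linarith
  qed
  finally show "\<bar>viol m g x - viol m g y\<bar> \<le> m * L * norm (x - y)" by simp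
qed

lemma lipschitz_c_tendsto_fibre:
  assumes "lipschitz_c Iz L h"
  shows "((\<lambda>y. h (y + d)) \<longlongrightarrow> h (x + d)) (fibre_nhds Iz x)"
proof (rule LIM_zero_cancel, rule Lim_transform_bound[where g = "\<lambda>y. L * dist y x"])
  show "eventually (\<lambda>y. norm (h (y + d) - h (x + d)) \<le> norm (L * dist y x)) (fibre_nhds Iz x)"
    using eventually_fibre_nhds_fibre
  proof eventually_elim
    case (elim y)
    then have "\<forall>i\<in>Iz. (y + d)$i = (x + d)$i" unfolding fibre_def by simp
    then have "\<bar>h (y + d) - h (x + d)\<bar> \<le> L * norm (y + d - (x + d))"
      using assms unfolding lipschitz_c_def by blast
    then show ?case by (simp add: dist_norm)
  qed
  have "((\<lambda>y. L * dist y x) \<longlongrightarrow> L * dist x x) (nhds x)" by (intro tendsto_intros filterlim_ident)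
  then have "((\<lambda>y. L * dist y x) \<longlongrightarrow> 0) (nhds x)" by simp
  then show "((\<lambda>y. L * dist y x) \<longlongrightarrow> 0) (fibre_nhds Iz x)"
    unfolding fibre_nhds_def by (rule tendsto_mono[OF inf_le1])
qed

lemma viol_le_of_descent:
  assumes "\<forall>i<m. g i y' \<le> g i y - c \<or> g i y' \<le> 0" "j < m" "0 < g j y'" "g j y' \<le> g j y - c" "0 \<le> c"
  shows "viol m g y' \<le> viol m g y - c"
proof -
  let ?T = "\<lambda>i. max 0 (g i y') - max 0 (g i y)"
  have "viol m g y' - viol m g y = ?T j + (\<Sum>i\<in>{..<m} - {j}. ?T i)"
    unfolding viol_def using assms(2) by (simp add: sum_subtractf sum.remove)
  also have "(\<Sum>i\<in>{..<m} - {j}. ?T i) \<le> 0"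
  proof (rule sum_nonpos)
    fix i assume "i \<in> {..<m} - {j}"
    then have "g i y' \<le> g i y - c \<or> g i y' \<le> 0" using assms(1) by blast
    then show "?T i \<le> 0" using assms(5) by (auto simp: max_def)
  qed
  finally show ?thesis using assms(3,4) by simp
qed

lemma diff_quotient_penalty:
  "diff_quotient (penalty f m g \<epsilon>) s z = diff_quotient f s z + (1 / \<epsilon>) * diff_quotient (viol m g) s z"
  unfolding diff_quotient_def penalty_def by (simp add: diff_divide_distrib add_divide_distrib algebra_simps)

lemma clarke_c_penalty_le:
  assumes "lipschitz_c Iz L f" "\<forall>i\<in>Iz. s$i = 0" "0 < \<epsilon>"
    and "eventually (\<lambda>z. diff_quotient (viol m g) s z \<le> - \<delta>) (clarke_filter Iz x)"
  shows "clarke_c Iz (penalty f m g \<epsilon>) x s \<le> ereal (L * norm s - \<delta> / \<epsilon>)"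
  unfolding clarke_c_eq_Limsup
proof (rule Limsup_bounded)
  show "eventually (\<lambda>z. ereal (diff_quotient (penalty f m g \<epsilon>) s z) \<le> ereal (L * norm s - \<delta> / \<epsilon>))
      (clarke_filter Iz x)"
    using eventually_clarke_filter_pos assms(4)
  proof eventually_elim
    case (elim z)
    have "diff_quotient f s z \<le> L * norm s"
      using lipschitz_c_diff_quotient_bound[OF assms(1,2) elim(1)] by simp
    moreover have "(1 / \<epsilon>) * diff_quotient (viol m g) s z \<le> (1 / \<epsilon>) * - \<delta>"
      using elim(2) assms(3) by (intro mult_left_mono) auto
    ultimately show ?case by (simp add: diff_quotient_penalty)
  qed
qed

lemma diff_quotient_viol_le:
  assumes "0 < snd z" "0 \<le> \<delta>"
    and "\<forall>i<m. diff_quotient (g i) s z < - \<delta> \<or> g i (fst z + snd z *\<^sub>R s) < 0"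
    and "j < m" "diff_quotient (g j) s z < - \<delta>" "0 < g j (fst z + snd z *\<^sub>R s)"
  shows "diff_quotient (viol m g) s z \<le> - \<delta>"
proof -
  have step: "g i (fst z + snd z *\<^sub>R s) \<le> g i (fst z) - \<delta> * snd z" if "diff_quotient (g i) s z < - \<delta>" for i
    using that assms(1) unfolding diff_quotient_def by (simp add: divide_less_eq algebra_simps)
  have "viol m g (fst z + snd z *\<^sub>R s) \<le> viol m g (fst z) - \<delta> * snd z"
    using assms step by (intro viol_le_of_descent[where j = j]) (auto simp: less_imp_le)
  then show ?thesis using assms(1) unfolding diff_quotient_def by (simp add: divide_le_eq algebra_simps)
qed

lemma eventually_integer_step_estimates:
  assumes f_lip: "lipschitz_c Iz L f" and g_lip: "\<forall>i<m. lipschitz_c Iz L (g i)"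
    and "a < viol m g xb - viol m g (xb + d)" "f (xb + d) - f xb < b"
  shows "eventually (\<lambda>y. a < viol m g y - viol m g (y + d) \<and> f (y + d) - f y < b) (fibre_nhds Iz xb)"
proof (rule eventually_conj)
  have "((\<lambda>y. viol m g y - viol m g (y + d)) \<longlongrightarrow> viol m g xb - viol m g (xb + d)) (fibre_nhds Iz xb)"
    using lipschitz_c_tendsto_fibre[OF lipschitz_c_viol[OF g_lip], of 0 xb]
      lipschitz_c_tendsto_fibre[OF lipschitz_c_viol[OF g_lip], of d xb]
    by (intro tendsto_diff) simp_all
  then show "eventually (\<lambda>y. a < viol m g y - viol m g (y + d)) (fibre_nhds Iz xb)"
    using assms(3) by (rule order_tendstoD(1))
  have "((\<lambda>y. f (y + d) - f y) \<longlongrightarrow> f (xb + d) - f xb) (fibre_nhds Iz xb)"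
    using lipschitz_c_tendsto_fibre[OF f_lip, of d xb] lipschitz_c_tendsto_fibre[OF f_lip, of 0 xb]
    by (intro tendsto_diff) simp_all
  then show "eventually (\<lambda>y. f (y + d) - f y < b) (fibre_nhds Iz xb)"
    using assms(4) by (rule order_tendstoD(2))
qed

lemma eventually_nonstationary_integer_descent:
  fixes Iz :: "'n::finite set"
  assumes f_lip: "lipschitz_c Iz L f" and g_lip: "\<forall>i<m. lipschitz_c Iz L (g i)"
    and xb: "xb \<in> Zset Iz" and d: "d \<in> Dz Iz l u xb" and descent: "viol m g (xb + d) < viol m g xb"
  shows "\<exists>e0>0. eventually (\<lambda>x. \<forall>\<epsilon>. 0 < \<epsilon> \<and> \<epsilon> \<le> e0 \<longrightarrow>
           \<not> clarke_stationary Iz l u (penalty f m g \<epsilon>) x) (nhds xb)"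
proof -
  define \<eta> where "\<eta> = viol m g xb - viol m g (xb + d)"
  define C where "C = \<bar>f (xb + d) - f xb\<bar> + 1"
  define e0 where "e0 = \<eta> / (2 * C)"
  have "0 < \<eta>" "0 < C" using descent by (simp_all add: \<eta>_def C_def add_nonneg_pos)
  have "eventually (\<lambda>y. y \<in> fibre Iz xb \<and> \<eta> / 2 < viol m g y - viol m g (y + d) \<and> f (y + d) - f y < C)
      (fibre_nhds Iz xb)"
    using \<open>0 < \<eta>\<close> by (intro eventually_conj eventually_fibre_nhds_fibre
        eventually_integer_step_estimates[OF f_lip g_lip]) (simp_all add: \<eta>_def C_def)
  then have "eventually (\<lambda>x. x \<in> Zset Iz \<longrightarrow> x \<in> fibre Iz xb \<and>
      \<eta> / 2 < viol m g x - viol m g (x + d) \<and> f (x + d) - f x < C) (nhds xb)"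
    by (rule eventually_grid_fibre[OF xb])
  then have "eventually (\<lambda>x. \<forall>\<epsilon>. 0 < \<epsilon> \<and> \<epsilon> \<le> e0 \<longrightarrow>
      \<not> clarke_stationary Iz l u (penalty f m g \<epsilon>) x) (nhds xb)"
  proof (elim eventually_mono, intro allI impI notI)
    fix x \<epsilon> assume near: "x \<in> Zset Iz \<longrightarrow> x \<in> fibre Iz xb \<and>
        \<eta> / 2 < viol m g x - viol m g (x + d) \<and> f (x + d) - f x < C"
      and \<epsilon>: "0 < \<epsilon> \<and> \<epsilon> \<le> e0" and stat: "clarke_stationary Iz l u (penalty f m g \<epsilon>) x"
    have x: "x \<in> boxX l u \<inter> Zset Iz" using stat unfolding clarke_stationary_def by blast
    then have "x + d \<in> Bz Iz l u x" using near Dz_fibre[OF _ _ d] unfolding Bz_def by blast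
    then have "penalty f m g \<epsilon> x \<le> penalty f m g \<epsilon> (x + d)"
      using stat unfolding clarke_stationary_def by blast
    then have "(viol m g x - viol m g (x + d)) / \<epsilon> \<le> f (x + d) - f x"
      unfolding penalty_def by (simp add: diff_divide_distrib)
    then have "viol m g x - viol m g (x + d) \<le> \<epsilon> * (f (x + d) - f x)"
      using \<epsilon> by (simp add: pos_divide_le_eq mult.commute)
    also have "\<dots> \<le> \<epsilon> * C" using near x \<epsilon> by (intro mult_left_mono) auto
    also have "\<dots> \<le> e0 * C" using \<epsilon> \<open>0 < C\<close> by (intro mult_right_mono) auto
    also have "\<dots> = \<eta> / 2" using \<open>0 < C\<close> by (simp add: e0_def)
    finally show False using near x by simp
  qed
  moreover have "0 < e0" using \<open>0 < \<eta>\<close> \<open>0 < C\<close> by (simp add: e0_def)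
  ultimately show ?thesis by blast
qed

lemma clarke_c_penalty_neg:
  assumes L: "0 \<le> L" and f_lip: "lipschitz_c Iz L f" and s0: "\<forall>i\<in>Iz. s$i = 0"
    and g_lip: "lipschitz_c Iz L (g j)" and j: "j < m" "0 < g j x"
    and \<delta>: "0 < \<delta>" and \<epsilon>: "0 < \<epsilon>" "\<epsilon> \<le> \<delta> / (L * norm s + 1)"
    and descent: "eventually (\<lambda>z. \<forall>i<m. diff_quotient (g i) s z < - \<delta> \<or> g i (fst z + snd z *\<^sub>R s) < 0)
      (clarke_filter Iz x)"
    and descent_j: "eventually (\<lambda>z. diff_quotient (g j) s z < - \<delta>) (clarke_filter Iz x)"
  shows "clarke_c Iz (penalty f m g \<epsilon>) x s < 0"
proof -
  have "(g j \<longlongrightarrow> g j x) (fibre_nhds Iz x)" using lipschitz_c_tendsto_fibre[OF g_lip, of 0 x] by simp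
  from order_tendstoD(1)[OF this j(2)] have "eventually (\<lambda>z. 0 < g j (fst z + snd z *\<^sub>R s)) (clarke_filter Iz x)"
    by (rule eventually_compose_filterlim[OF _ filterlim_clarke_filter_step[OF s0]])
  with eventually_clarke_filter_pos descent descent_j
  have "eventually (\<lambda>z. diff_quotient (viol m g) s z \<le> - \<delta>) (clarke_filter Iz x)"
    by eventually_elim (rule diff_quotient_viol_le[OF _ less_imp_le[OF \<delta>] _ j(1)])
  then have "clarke_c Iz (penalty f m g \<epsilon>) x s \<le> ereal (L * norm s - \<delta> / \<epsilon>)"
    by (rule clarke_c_penalty_le[OF f_lip s0 \<epsilon>(1)])
  also have "L * norm s - \<delta> / \<epsilon> < 0"
  proof -
    have "0 < L * norm s + 1" using L by (simp add: add_nonneg_pos)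
    then have "\<epsilon> * (L * norm s + 1) \<le> \<delta>" using \<epsilon>(2) by (simp add: le_divide_eq)
    then have "L * norm s + 1 \<le> \<delta> / \<epsilon>" using \<epsilon>(1) by (simp add: le_divide_eq mult.commute)
    then show ?thesis by simp
  qed
  finally show ?thesis by (simp add: zero_ereal_def)
qed

lemma eventually_uniform_descent:
  fixes Iz :: "'n::finite set" and g :: "nat \<Rightarrow> real^'n \<Rightarrow> real"
  assumes g_lip: "\<forall>i<m. lipschitz_c Iz L (g i)" and xb: "xb \<in> Zset Iz" and s0: "\<forall>i\<in>Iz. s$i = 0"
    and active: "\<forall>i<m. 0 \<le> g i xb \<longrightarrow> clarke_real Iz (g i) xb s < 0"
  shows "\<exists>\<delta>>0. eventually (\<lambda>x. x \<in> Zset Iz \<longrightarrow>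
    (\<forall>j<m. 0 < g j x \<longrightarrow> eventually (\<lambda>z. diff_quotient (g j) s z < - \<delta>) (clarke_filter Iz x)) \<and>
    eventually (\<lambda>z. \<forall>i<m. diff_quotient (g i) s z < - \<delta> \<or> g i (fst z + snd z *\<^sub>R s) < 0)
      (clarke_filter Iz x)) (nhds xb)"
proof -
  define A where "A = {i. i < m \<and> 0 \<le> g i xb}"
  have "finite A" unfolding A_def by simp
  have small: "eventually (\<lambda>\<delta>. \<delta> < - clarke_real Iz (g i) xb s) (at_right 0)" if "i \<in> A" for i
    using active that unfolding A_def by (intro order_tendstoD(2)[OF tendsto_ident_at]) simp
  have "eventually (\<lambda>\<delta>. clarke_real Iz (g i) xb s < - \<delta>) (at_right 0)" if "i \<in> A" for i
    by (rule eventually_mono[OF small[OF that]]) linarith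
  then have "eventually (\<lambda>\<delta>. 0 < \<delta> \<and> (\<forall>i\<in>A. clarke_real Iz (g i) xb s < - \<delta>)) (at_right 0)"
    using \<open>finite A\<close> by (intro eventually_conj eventually_at_right_less eventually_ball_finite) auto
  then obtain \<delta> where \<delta>: "0 < \<delta>" "\<forall>i\<in>A. clarke_real Iz (g i) xb s < - \<delta>"
    using eventually_happens'[OF trivial_limit_at_right_real] by blast
  have "eventually (\<lambda>y. i \<notin> A \<longrightarrow> g i y < 0) (fibre_nhds Iz xb)" if "i \<in> {..<m}" for i
    using order_tendstoD(2)[OF lipschitz_c_tendsto_fibre[of Iz L "g i" 0 xb]] g_lip that
    by (cases "i \<in> A") (auto simp: A_def)
  then have inactive: "eventually (\<lambda>y. \<forall>i\<in>{..<m}. i \<notin> A \<longrightarrow> g i y < 0) (fibre_nhds Iz xb)"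
    by (intro eventually_ball_finite) auto
  define descent where "descent z \<longleftrightarrow> (\<forall>i<m. (i \<in> A \<longrightarrow> diff_quotient (g i) s z < - \<delta>) \<and>
      (i \<notin> A \<longrightarrow> g i (fst z + snd z *\<^sub>R s) < 0))" for z
  have "eventually (\<lambda>z. \<forall>i\<in>A. diff_quotient (g i) s z < - \<delta>) (clarke_filter Iz xb)"
    using \<delta>(2) g_lip \<open>finite A\<close> unfolding A_def
    by (intro eventually_ball_finite ballI eventually_diff_quotient_less[OF _ s0]) auto
  moreover have "eventually (\<lambda>z. \<forall>i\<in>{..<m}. i \<notin> A \<longrightarrow> g i (fst z + snd z *\<^sub>R s) < 0) (clarke_filter Iz xb)"
    by (rule eventually_compose_filterlim[OF inactive filterlim_clarke_filter_step[OF s0]])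
  ultimately have "eventually descent (clarke_filter Iz xb)"
    unfolding descent_def by eventually_elim auto
  then have "eventually (\<lambda>x. x \<in> Zset Iz \<longrightarrow>
      eventually descent (clarke_filter Iz x) \<and> (\<forall>i\<in>{..<m}. i \<notin> A \<longrightarrow> g i x < 0)) (nhds xb)"
    using inactive by (intro eventually_grid_fibre[OF xb] eventually_conj eventually_fibre_nhds_clarke_filter)
  then show ?thesis
    using \<delta>(1) unfolding descent_def by (intro exI[of _ \<delta>]) (fastforce elim!: eventually_mono)
qed

lemma eventually_nonstationary_descent_direction:
  fixes Iz :: "'n::finite set"
  assumes L: "0 \<le> L" and f_lip: "lipschitz_c Iz L f" and g_lip: "\<forall>i<m. lipschitz_c Iz L (g i)"
    and xb: "xb \<in> Zset Iz" and s: "s \<in> Dc Iz l u xb"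
    and sg: "\<forall>i<m. 0 \<le> g i xb \<longrightarrow> (\<forall>\<xi>\<in>clarke_subdiff_c Iz (g i) xb. \<xi> \<bullet> s < 0)"
  shows "\<exists>e0>0. eventually (\<lambda>x. \<forall>\<epsilon>. 0 < \<epsilon> \<and> \<epsilon> \<le> e0 \<longrightarrow> x \<notin> feasF m g \<longrightarrow>
           \<not> clarke_stationary Iz l u (penalty f m g \<epsilon>) x) (nhds xb)"
proof -
  have s0: "\<forall>i\<in>Iz. s$i = 0" using s unfolding Dc_def by blast
  have "\<forall>i<m. 0 \<le> g i xb \<longrightarrow> clarke_real Iz (g i) xb s < 0"
    using clarke_subdiff_c_attains[OF _ s0] g_lip sg by fastforce
  then obtain \<delta> where \<delta>: "0 < \<delta>" and near: "eventually (\<lambda>x. x \<in> Zset Iz \<longrightarrow>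
      (\<forall>j<m. 0 < g j x \<longrightarrow> eventually (\<lambda>z. diff_quotient (g j) s z < - \<delta>) (clarke_filter Iz x)) \<and>
      eventually (\<lambda>z. \<forall>i<m. diff_quotient (g i) s z < - \<delta> \<or> g i (fst z + snd z *\<^sub>R s) < 0)
        (clarke_filter Iz x)) (nhds xb)"
    using eventually_uniform_descent[OF g_lip xb s0] by blast
  define e0 where "e0 = \<delta> / (L * norm s + 1)"
  have "eventually (\<lambda>x. \<forall>\<epsilon>. 0 < \<epsilon> \<and> \<epsilon> \<le> e0 \<longrightarrow> x \<notin> feasF m g \<longrightarrow>
      \<not> clarke_stationary Iz l u (penalty f m g \<epsilon>) x) (nhds xb)"
    using near eventually_Dc_subset[of Iz l u xb]
  proof (eventually_elim, intro allI impI notI)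
    fix x \<epsilon> assume near_x: "x \<in> Zset Iz \<longrightarrow>
        (\<forall>j<m. 0 < g j x \<longrightarrow> eventually (\<lambda>z. diff_quotient (g j) s z < - \<delta>) (clarke_filter Iz x)) \<and>
        eventually (\<lambda>z. \<forall>i<m. diff_quotient (g i) s z < - \<delta> \<or> g i (fst z + snd z *\<^sub>R s) < 0)
          (clarke_filter Iz x)"
      and Dc_x: "Dc Iz l u xb \<subseteq> Dc Iz l u x" and \<epsilon>: "0 < \<epsilon> \<and> \<epsilon> \<le> e0"
      and infeasible: "x \<notin> feasF m g" and stat: "clarke_stationary Iz l u (penalty f m g \<epsilon>) x"
    have "x \<in> Zset Iz" using stat unfolding clarke_stationary_def by blast
    obtain j where j: "j < m" "0 < g j x" using infeasible unfolding feasF_def by (auto simp: not_le)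
    have "clarke_c Iz (penalty f m g \<epsilon>) x s < 0"
      using near_x \<open>x \<in> Zset Iz\<close> g_lip j \<delta> \<epsilon>
      by (intro clarke_c_penalty_neg[where g = g and j = j and \<delta> = \<delta>, OF L f_lip s0]) (auto simp: e0_def)
    moreover have "0 \<le> clarke_c Iz (penalty f m g \<epsilon>) x s"
      using stat s Dc_x unfolding clarke_stationary_def by blast
    ultimately show False by simp
  qed
  moreover have "0 < e0" using \<delta> L by (simp add: e0_def add_nonneg_pos)
  ultimately show ?thesis by blast
qed

lemma eventually_nonstationary:
  fixes Iz :: "'n::finite set"
  assumes L: "0 \<le> L" and f_lip: "lipschitz_c Iz L f" and g_lip: "\<forall>i<m. lipschitz_c Iz L (g i)"
    and emfcq: "EMFCQ Iz l u m g" and xb: "xb \<in> boxX l u \<inter> Zset Iz"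
  shows "\<exists>e0>0. eventually (\<lambda>x. \<forall>\<epsilon>. 0 < \<epsilon> \<and> \<epsilon> \<le> e0 \<longrightarrow> x \<notin> feasF m g \<longrightarrow>
           \<not> clarke_stationary Iz l u (penalty f m g \<epsilon>) x) (nhds xb)"
proof (cases "xb \<in> interior (feasF m g)")
  case True
  have "eventually (\<lambda>x. x \<in> interior (feasF m g)) (nhds xb)"
    by (rule eventually_nhds_in_open[OF open_interior True])
  then show ?thesis by (intro exI[of _ 1]) (auto elim!: eventually_mono dest: interior_subset[THEN subsetD])
next
  case False
  with xb emfcq consider
    (direction) s where "s \<in> Dc Iz l u xb"
      "\<forall>i<m. 0 \<le> g i xb \<longrightarrow> (\<forall>\<xi>\<in>clarke_subdiff_c Iz (g i) xb. \<xi> \<bullet> s < 0)"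
  | (integer) d where "d \<in> Dz Iz l u xb" "viol m g (xb + d) < viol m g xb"
    unfolding EMFCQ_def by blast
  then show ?thesis
  proof cases
    case direction
    with xb show ?thesis by (intro eventually_nonstationary_descent_direction[OF L f_lip g_lip]) simp_all
  next
    case integer
    with xb obtain e where "0 < e" "eventually (\<lambda>x. \<forall>\<epsilon>. 0 < \<epsilon> \<and> \<epsilon> \<le> e \<longrightarrow>
        \<not> clarke_stationary Iz l u (penalty f m g \<epsilon>) x) (nhds xb)"
      using eventually_nonstationary_integer_descent[OF f_lip g_lip] by blast
    then show ?thesis by (auto elim!: eventually_mono)
  qed
qed

theorem mainTheorem6:
  fixes Iz :: "'n::finite set"
    and l u :: "real^'n"
    and f :: "real^'n \<Rightarrow> real"
    and g :: "nat \<Rightarrow> real^'n \<Rightarrow> real"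
    and m :: nat
    and L :: real
  assumes lu: "\<forall>i. l$i < u$i"
    and lu_int: "\<forall>i\<in>Iz. l$i \<in> \<int> \<and> u$i \<in> \<int>"
    and L_pos: "L > 0"
    and f_lip: "lipschitz_c Iz L f"
    and g_lip: "\<forall>i<m. lipschitz_c Iz L (g i)"
    and emfcq: "EMFCQ Iz l u m g"
  shows "\<exists>\<epsilon>s>0. \<forall>\<epsilon>. 0 < \<epsilon> \<and> \<epsilon> \<le> \<epsilon>s \<longrightarrow>
           \<not> (\<exists>x\<in>(boxX l u \<inter> Zset Iz) - feasF m g.
                 clarke_stationary Iz l u (penalty f m g \<epsilon>) x)"
proof -
  have "\<forall>xb\<in>boxX l u \<inter> Zset Iz. \<exists>e0>0. eventually (\<lambda>x. \<forall>\<epsilon>. 0 < \<epsilon> \<and> \<epsilon> \<le> e0 \<longrightarrow>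
      x \<notin> feasF m g \<longrightarrow> \<not> clarke_stationary Iz l u (penalty f m g \<epsilon>) x) (nhds xb)"
    using eventually_nonstationary[OF less_imp_le[OF L_pos] f_lip g_lip emfcq] by blast
  from compact_uniform_threshold[OF compact_box_grid this]
  obtain \<epsilon>s where "0 < \<epsilon>s" "\<forall>x\<in>boxX l u \<inter> Zset Iz. \<forall>\<epsilon>. 0 < \<epsilon> \<and> \<epsilon> \<le> \<epsilon>s \<longrightarrow>
      x \<notin> feasF m g \<longrightarrow> \<not> clarke_stationary Iz l u (penalty f m g \<epsilon>) x"
    by blast
  then show ?thesis by blast
qed

end
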